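(* There is no Lie algebra homomorphism $s:L_1\to\Lambda_1(\mathbb{Q}\mathrm{Par})^+$ with $\varepsilon_2\circ s=\mathrm{id}_{L_1}$ such that $s$ maps $\mathbb{Q}x^m\frac{d}{dx}$ into $\mathbb{Q}\mathrm{Par}((m))$ for each $m\ge2$. In other words, the augmentation homomorphism $\varepsilon_2:\Lambda_1(\mathbb{Q}\mathrm{Par})^+\to L_1$ has no such splitting.
   Context: The nonsymmetric operad of partitions $\mathrm{Par}$: $\mathrm{Par}((1))=\{1\}$, and for $m\ge2$, $\mathrm{Par}((m))$ is the set of monomials $\prod_{i=1}^Nx_i^{a_i}$ with $N\ge2$, all $a_i\ge1$, $\sum a_i=m$. Partial composition: if $a_1+\dots+a_{l-1}+1\le s\le a_1+\dots+a_l$, then $\left(\prod_{i=1}^Nx_i^{a_i}\right)\circ_s\left(\prod_{k=1}^{N_s}x_k^{b_k}\right)=x_l^{a_l-1+\sum_kb_k}\prod_{i\ne l}x_i^{a_i}$; $1$ is a two-sided unit. $\Lambda_1(\mathbb{Q}\mathrm{Par})=\bigoplus_{m\ge2}\mathbb{Q}\mathrm{Par}((m))$ with Lie bracket $[c,d]=\sum_{t=1}^{j}d\circ_tc-\sum_{s=1}^{k}c\circ_sd$ for $c\in\mathrm{Par}((k))$, $d\in\mathrm{Par}((j))$. The involution $\iota$ of $\Lambda_1(\mathbb{Q}\mathrm{Par})$ is the linear map with $\iota(x_1^{a_1}x_2^{a_2}\cdots x_n^{a_n})=x_1^{a_n}x_2^{a_{n-1}}\cdots x_n^{a_1}$; it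 is a Lie algebra automorphism, and $\Lambda_1(\mathbb{Q}\mathrm{Par})^+=\{u:\iota(u)=u\}$ is a Lie subalgebra. $L_1=x^2\mathbb{Q}[x]\frac{d}{dx}$, and $\varepsilon_2$ is the restriction to $\Lambda_1(\mathbb{Q}\mathrm{Par})^+$ of the augmentation homomorphism, which sends every monomial in $\mathrm{Par}((m))$ to $x^m\frac{d}{dx}$. *)

theory Defs
  imports "HOL-Computational_Algebra.Polynomial"
begin

text \<open>Monomials x_1^{a_1}...x_N^{a_N} of Par((m)), m >= 2, are encoded as the lists
  [a_1,...,a_N] with N >= 2, all a_i >= 1, and sum = m.\<close>

definition ParAll :: "nat list set" where
  "ParAll = {c. 2 \<le> length c \<and> 0 \<notin> set c}"

definition Par :: "nat \<Rightarrow> nat list set" where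
  "Par m = {c \<in> ParAll. sum_list c = m}"

text \<open>Partial composition c o_s d (positions s = 1 .. sum c), for c, d of length >= 2.
  l is the (0-based) index with a_1+...+a_{l} < s <= a_1+...+a_{l+1}.\<close>

definition pcomp :: "nat list \<Rightarrow> nat \<Rightarrow> nat list \<Rightarrow> nat list" where
  "pcomp c s d =
     (let l = (LEAST i. s \<le> sum_list (take (Suc i) c))
      in c[l := c ! l - 1 + sum_list d])"

text \<open>Coefficient of the monomial e in the bracket [c,d] = sum_t d o_t c - sum_s c o_s d.\<close>

definition elem_bracket :: "nat list \<Rightarrow> nat list \<Rightarrow> nat list \<Rightarrow> rat" where
  "elem_bracket c d e =
     of_nat (card {t \<in> {1..sum_list d}. pcomp d t c = e})
   - of_nat (card {s \<in> {1..sum_list c}. pcomp c s d = e})"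

text \<open>Elements of Lambda_1(QPar): finitely supported rational functions on ParAll.\<close>

definition Lambda1 :: "(nat list \<Rightarrow> rat) set" where
  "Lambda1 = {u. finite {c. u c \<noteq> 0} \<and> {c. u c \<noteq> 0} \<subseteq> ParAll}"

definition lie_br :: "(nat list \<Rightarrow> rat) \<Rightarrow> (nat list \<Rightarrow> rat) \<Rightarrow> (nat list \<Rightarrow> rat)" where
  "lie_br u v = (\<lambda>e. \<Sum>c\<in>{c. u c \<noteq> 0}. \<Sum>d\<in>{d. v d \<noteq> 0}. u c * v d * elem_bracket c d e)"

definition iota :: "(nat list \<Rightarrow> rat) \<Rightarrow> (nat list \<Rightarrow> rat)" where
  "iota u = (\<lambda>c. u (rev c))"

definition Lambda1_plus :: "(nat list \<Rightarrow> rat) set" where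
  "Lambda1_plus = {u \<in> Lambda1. iota u = u}"

text \<open>L_1 = x^2 Q[x] d/dx; the vector field f(x) d/dx is encoded by the polynomial f.\<close>

definition L1 :: "rat poly set" where
  "L1 = {f. coeff f 0 = 0 \<and> coeff f 1 = 0}"

definition L1_br :: "rat poly \<Rightarrow> rat poly \<Rightarrow> rat poly" where
  "L1_br f g = f * pderiv g - g * pderiv f"

definition eps2 :: "(nat list \<Rightarrow> rat) \<Rightarrow> rat poly" where
  "eps2 u = (\<Sum>c\<in>{c. u c \<noteq> 0}. monom (u c) (sum_list c))"

end

theory Submission imports Defs begin

text \<open>Write \<open>u\<^sub>m\<close> for the image of \<open>x\<^sup>m d/dx\<close>. The grading and
  \<open>\<epsilon>\<^sub>2 \<circ> s = id\<close> force \<open>u\<^sub>2 = x\<^sub>1x\<^sub>2\<close>, and together with \<open>\<iota>\<close>-invariance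
  \<open>u\<^sub>3 = a x\<^sub>1x\<^sub>2x\<^sub>3 + b (x\<^sub>1x\<^sub>2\<^sup>2 + x\<^sub>1\<^sup>2x\<^sub>2)\<close> with \<open>a + 2b = 1\<close>.
  Then \<open>u\<^sub>4 = [u\<^sub>2,u\<^sub>3]\<close> and \<open>2u\<^sub>5 = [u\<^sub>2,u\<^sub>4]\<close> are determined, and the relation
  \<open>[x\<^sup>2, 2x\<^sup>5] = 6x\<^sup>6 = 6[x\<^sup>3,x\<^sup>4]\<close> in \<open>L\<^sub>1\<close> must hold for their images.
  Comparing the coefficients of \<open>x\<^sub>1\<^sup>3x\<^sub>2\<^sup>3\<close> gives \<open>16b - 4a = -12a\<close>,
  i.e. \<open>a + 2b = 0\<close>, a contradiction.\<close>

abbreviation support :: "(nat list \<Rightarrow> rat) \<Rightarrow> nat list set" where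
  "support u \<equiv> {c. u c \<noteq> 0}"

lemma pcomp_Cons:
  assumes "s \<le> sum_list (a # c)"
  shows "pcomp (a # c) s d = (if s \<le> a then (a - 1 + sum_list d) # c else a # pcomp c (s - a) d)"
proof (cases "s \<le> a")
  case True
  then show ?thesis by (simp add: pcomp_def)
next
  case False
  let ?P = "\<lambda>i. s \<le> sum_list (take (Suc i) (a # c))"
  have "?P (length c)" using assms by simp
  moreover have "\<not> ?P 0" using False by simp
  ultimately have "(LEAST i. ?P i) = Suc (LEAST m. ?P (Suc m))" by (rule Least_Suc)
  moreover have "(\<lambda>m. ?P (Suc m)) = (\<lambda>m. s - a \<le> sum_list (take (Suc m) c))"
    using False by (auto simp: fun_eq_iff)
  ultimately have "(LEAST i. ?P i) = Suc (LEAST m. s - a \<le> sum_list (take (Suc m) c))"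
    by simp
  then show ?thesis using False unfolding pcomp_def Let_def by simp
qed

lemma card_filter_atLeastAtMost: "card {t \<in> {1..n}. P t} = length (filter P [1..<Suc n])"
proof -
  have "{t \<in> {1..n}. P t} = set (filter P [1..<Suc n])" by (auto simp del: upt_Suc)
  then show ?thesis using distinct_card[of "filter P [1..<Suc n]"] by (simp del: upt_Suc)
qed

lemma elem_bracket_filter:
  "elem_bracket c d e =
     of_nat (length (filter (\<lambda>t. pcomp d t c = e) [1..<Suc (sum_list d)]))
   - of_nat (length (filter (\<lambda>s. pcomp c s d = e) [1..<Suc (sum_list c)]))"
  unfolding elem_bracket_def card_filter_atLeastAtMost ..

lemma lie_br_sum_superset:
  assumes "finite A" "finite B" "support u \<subseteq> A" "support v \<subseteq> B"
  shows "lie_br u v e = (\<Sum>c\<in>A. \<Sum>d\<in>B. u c * v d * elem_bracket c d e)"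
proof -
  have "(\<Sum>d\<in>support v. u c * v d * elem_bracket c d e) = (\<Sum>d\<in>B. u c * v d * elem_bracket c d e)"
    for c by (rule sum.mono_neutral_left) (use assms in auto)
  then have "lie_br u v e = (\<Sum>c\<in>support u. \<Sum>d\<in>B. u c * v d * elem_bracket c d e)"
    unfolding lie_br_def by simp
  also have "\<dots> = (\<Sum>c\<in>A. \<Sum>d\<in>B. u c * v d * elem_bracket c d e)"
    by (rule sum.mono_neutral_left) (use assms in auto)
  finally show ?thesis .
qed

lemma eps2_homogeneous:
  assumes "finite A" "support u \<subseteq> A" "\<forall>c\<in>A. sum_list c = m"
  shows "eps2 u = monom (\<Sum>c\<in>A. u c) m"
proof -
  have "eps2 u = (\<Sum>c\<in>A. monom (u c) (sum_list c))"
    unfolding eps2_def by (rule sum.mono_neutral_left) (use assms in auto)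
  also have "\<dots> = (\<Sum>c\<in>A. monom (u c) m)" using assms(3) by simp
  finally show ?thesis by (simp add: monom_sum)
qed

lemma Lambda1_plus_rev: "u \<in> Lambda1_plus \<Longrightarrow> u (rev c) = u c"
  unfolding Lambda1_plus_def iota_def by (metis (mono_tags) mem_Collect_eq)

lemma monom_in_L1: "2 \<le> m \<Longrightarrow> monom a m \<in> L1"
  by (simp add: L1_def)

lemma L1_br_monom:
  assumes "1 \<le> m" "1 \<le> n"
  shows "L1_br (monom a m) (monom b n) = monom (a * b * (of_nat n - of_nat m)) (m + n - 1)"
  using assms by (simp add: L1_br_def pderiv_monom mult_monom diff_monom algebra_simps)

fun compositions :: "nat \<Rightarrow> nat list list" where
  "compositions 0 = [[]]"
| "compositions (Suc n) =
     concat (map (\<lambda>a. map ((#) a) (compositions (Suc n - a))) [1..<Suc (Suc n)])"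

lemma compositions_complete: "0 \<notin> set c \<Longrightarrow> c \<in> set (compositions (sum_list c))"
proof (induction c)
  case (Cons a c)
  then obtain n where n: "a + sum_list c = Suc n" by (cases "a + sum_list c") auto
  have a: "a \<in> set [1..<Suc (Suc n)]" using Cons.prems n by auto
  have "a # c \<in> (#) a ` set (compositions (Suc n - a))"
    using Cons.IH Cons.prems by (simp add: n[symmetric] del: compositions.simps)
  with a have "a # c \<in> (\<Union>x\<in>set [1..<Suc (Suc n)]. set (map ((#) x) (compositions (Suc n - x))))"
    by (intro UN_I[of a]) (simp_all del: upt_Suc compositions.simps)
  then show ?case
    by (simp only: sum_list.Cons n compositions.simps(2) set_concat set_map image_image)
qed simp

lemma Par_subset_compositions: "Par n \<subseteq> set (filter (\<lambda>c. 2 \<le> length c) (compositions n))"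
  using compositions_complete by (fastforce simp: Par_def ParAll_def)

lemma Par_2_subset: "Par 2 \<subseteq> {[1,1]}"
proof -
  have "compositions 2 = [[1,1],[2]]" by code_simp
  then show ?thesis using Par_subset_compositions[of 2] by simp
qed

lemma Par_3_subset: "Par 3 \<subseteq> {[1,1,1],[1,2],[2,1]}"
proof -
  have "compositions 3 = [[1,1,1],[1,2],[2,1],[3]]" by code_simp
  then show ?thesis using Par_subset_compositions[of 3] by simp
qed

lemma Par_4_subset: "Par 4 \<subseteq> {[1,1,1,1],[1,1,2],[1,2,1],[1,3],[2,1,1],[2,2],[3,1]}"
proof -
  have "compositions 4 = [[1,1,1,1],[1,1,2],[1,2,1],[1,3],[2,1,1],[2,2],[3,1],[4]]"
    by code_simp
  then show ?thesis using Par_subset_compositions[of 4] by simp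
qed

lemma Par_5_subset:
  "Par 5 \<subseteq> {[1,1,1,1,1],[1,1,1,2],[1,1,2,1],[1,1,3],[1,2,1,1],[1,2,2],[1,3,1],[1,4],
             [2,1,1,1],[2,1,2],[2,2,1],[2,3],[3,1,1],[3,2],[4,1]}"
proof -
  have "compositions 5 = [[1,1,1,1,1],[1,1,1,2],[1,1,2,1],[1,1,3],[1,2,1,1],[1,2,2],[1,3,1],[1,4],
                          [2,1,1,1],[2,1,2],[2,2,1],[2,3],[3,1,1],[3,2],[4,1],[5]]"
    by code_simp
  then show ?thesis using Par_subset_compositions[of 5] by simp
qed

lemma lie_br_Par2_Par3:
  assumes "support u \<subseteq> Par 2" "support v \<subseteq> Par 3"
  shows "lie_br u v [1,3] = u [1,1] * (v [1,2] - v [2,1] - v [1,1,1])"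
    and "lie_br u v [3,1] = u [1,1] * (v [2,1] - v [1,2] - v [1,1,1])"
    and "lie_br u v [2,2] = u [1,1] * (v [1,2] + v [2,1])"
  by (simp_all add: lie_br_sum_superset[OF _ _ order.trans[OF assms(1) Par_2_subset]
                                             order.trans[OF assms(2) Par_3_subset]])
     (simp_all add: elem_bracket_filter upt_rec pcomp_Cons algebra_simps)

lemma lie_br_Par2_Par4:
  assumes "support u \<subseteq> Par 2" "support v \<subseteq> Par 4"
  shows "lie_br u v [2,3] = u [1,1] * (v [1,3] + 2 * v [2,2])"
    and "lie_br u v [3,2] = u [1,1] * (v [3,1] + 2 * v [2,2])"
  by (simp_all add: lie_br_sum_superset[OF _ _ order.trans[OF assms(1) Par_2_subset]
                                             order.trans[OF assms(2) Par_4_subset]])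
     (simp_all add: elem_bracket_filter upt_rec pcomp_Cons algebra_simps)

lemma lie_br_Par2_Par5:
  assumes "support u \<subseteq> Par 2" "support v \<subseteq> Par 5"
  shows "lie_br u v [3,3] = 2 * u [1,1] * (v [2,3] + v [3,2])"
  by (simp_all add: lie_br_sum_superset[OF _ _ order.trans[OF assms(1) Par_2_subset]
                                             order.trans[OF assms(2) Par_5_subset]])
     (simp_all add: elem_bracket_filter upt_rec pcomp_Cons algebra_simps)

lemma lie_br_Par3_Par4:
  assumes "support u \<subseteq> Par 3" "support v \<subseteq> Par 4"
  shows "lie_br u v [3,3] = (u [1,1,1] + u [1,2] + u [2,1]) * (v [1,3] + v [3,1])"
  by (simp_all add: lie_br_sum_superset[OF _ _ order.trans[OF assms(1) Par_3_subset]
                                             order.trans[OF assms(2) Par_4_subset]])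
     (simp_all add: elem_bracket_filter upt_rec pcomp_Cons algebra_simps)

lemma eps2_Par2:
  assumes "support u \<subseteq> Par 2"
  shows "eps2 u = monom (u [1,1]) 2"
  using eps2_homogeneous[of "{[1,1]}" u 2] order.trans[OF assms Par_2_subset] by simp

lemma eps2_Par3:
  assumes "support u \<subseteq> Par 3"
  shows "eps2 u = monom (u [1,1,1] + u [1,2] + u [2,1]) 3"
  using eps2_homogeneous[of "{[1,1,1],[1,2],[2,1]}" u 3] order.trans[OF assms Par_3_subset]
  by (simp add: add.assoc)

lemma graded_bracket_obstruction:
  assumes S2: "support u2 \<subseteq> Par 2" and S3: "support u3 \<subseteq> Par 3"
    and S4: "support u4 \<subseteq> Par 4" and S5: "support u5 \<subseteq> Par 5"
    and u4: "u4 = lie_br u2 u3" and u5: "u5 = lie_br u2 u4"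
    and u2_norm: "u2 [1,1] = 1" and u3_norm: "u3 [1,1,1] + u3 [1,2] + u3 [2,1] = 1"
    and u3_sym: "u3 [2,1] = u3 [1,2]"
  shows "lie_br u2 u5 [3,3] \<noteq> 6 * lie_br u3 u4 [3,3]"
proof -
  let ?a = "u3 [1,1,1]" and ?b = "u3 [1,2]"
  have u4_coeffs: "u4 [1,3] = - ?a" "u4 [3,1] = - ?a" "u4 [2,2] = 2 * ?b"
    using lie_br_Par2_Par3[OF S2 S3] u4 u2_norm u3_sym by simp_all
  have "lie_br u3 u4 [3,3] = - 2 * ?a"
    using lie_br_Par3_Par4[OF S3 S4] u4_coeffs u3_norm by simp
  moreover have "lie_br u2 u5 [3,3] = 16 * ?b - 4 * ?a"
    using lie_br_Par2_Par5[OF S2 S5] lie_br_Par2_Par4[OF S2 S4] u4_coeffs u5 u2_norm by simp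
  ultimately show ?thesis using u3_norm u3_sym by linarith
qed

theorem proposition7p2:
  shows "\<not> (\<exists>s :: rat poly \<Rightarrow> (nat list \<Rightarrow> rat).
     (\<forall>f\<in>L1. s f \<in> Lambda1_plus) \<and>
     (\<forall>f\<in>L1. \<forall>g\<in>L1. \<forall>a b :: rat.
        s (smult a f + smult b g) = (\<lambda>c. a * s f c + b * s g c)) \<and>
     (\<forall>f\<in>L1. \<forall>g\<in>L1. s (L1_br f g) = lie_br (s f) (s g)) \<and>
     (\<forall>f\<in>L1. eps2 (s f) = f) \<and>
     (\<forall>m\<ge>2. \<forall>a :: rat. \<forall>c. s (monom a m) c \<noteq> 0 \<longrightarrow> c \<in> Par m))"
proof (intro notI, elim exE conjE)
  fix s :: "rat poly \<Rightarrow> (nat list \<Rightarrow> rat)"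
  assume invariant: "\<forall>f\<in>L1. s f \<in> Lambda1_plus"
    and linear: "\<forall>f\<in>L1. \<forall>g\<in>L1. \<forall>a b :: rat.
        s (smult a f + smult b g) = (\<lambda>c. a * s f c + b * s g c)"
    and bracket: "\<forall>f\<in>L1. \<forall>g\<in>L1. s (L1_br f g) = lie_br (s f) (s g)"
    and splits: "\<forall>f\<in>L1. eps2 (s f) = f"
    and graded: "\<forall>m\<ge>2. \<forall>a :: rat. \<forall>c. s (monom a m) c \<noteq> 0 \<longrightarrow> c \<in> Par m"
  have supp: "support (s (monom a m)) \<subseteq> Par m" if "2 \<le> m" for a m
    using graded that by blast
  have br: "s (L1_br (monom a m) (monom b n)) = lie_br (s (monom a m)) (s (monom b n))"
    if "2 \<le> m" "2 \<le> n" for a b m n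
    using bracket that by (simp add: monom_in_L1)
  have "s (monom 6 6) = (\<lambda>c. 6 * s (monom 1 6) c)"
    using linear[rule_format, of "monom 1 6" "monom 1 6" 6 0]
    by (simp add: monom_in_L1 smult_monom)
  then have "lie_br (s (monom 1 2)) (s (monom 2 5)) [3,3]
              = 6 * lie_br (s (monom 1 3)) (s (monom 1 4)) [3,3]"
    using br[of 2 5 1 2] br[of 3 4 1 1] by (simp add: L1_br_monom fun_eq_iff)
  moreover have "s (monom 1 2) [1,1] = 1"
    using splits eps2_Par2[OF supp] by (simp add: monom_in_L1 monom_eq_iff')
  moreover have "s (monom 1 3) [1,1,1] + s (monom 1 3) [1,2] + s (monom 1 3) [2,1] = 1"
    using splits eps2_Par3[OF supp] by (simp add: monom_in_L1 monom_eq_iff')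
  moreover have "s (monom 1 3) [2,1] = s (monom 1 3) [1,2]"
    using Lambda1_plus_rev[of _ "[1,2]"] invariant monom_in_L1 by simp
  moreover have "s (monom 1 4) = lie_br (s (monom 1 2)) (s (monom 1 3))"
    and "s (monom 2 5) = lie_br (s (monom 1 2)) (s (monom 1 4))"
    using br[of 2 3 1 1] br[of 2 4 1 1] by (simp_all add: L1_br_monom)
  ultimately show False
    using graded_bracket_obstruction[OF supp supp supp supp] by simp
qed

end
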